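(* Let $k$ be a positive integer and let $L$ be a link with $\det L\neq 0$ admitting non-trivial $(2k+1)$-colorings. If $S\subseteq\{0,1,2,\dots,k\}\subseteq \mathbf{Z}/(2k+1)\mathbf{Z}$, then $S$ is not a $(2k+1)$-sufficient set of colors for $L$.
   Context: For a positive integer $n$, an $n$-coloring of a link diagram is an assignment of an element of $\mathbf{Z}/n\mathbf{Z}$ to each arc such that at every crossing, with over-arc color $b$ and under-arc colors $a,c$, $2b-a-c\equiv 0\pmod n$; it is non-trivial if at least two distinct colors are used. An $n$-sufficient set of colors for $L$ is a set of residues mod $n$ such that some diagram of $L$ admits a non-trivial $n$-coloring using only colors from this set. $\det L$ denotes the determinant of the link $L$. *)

theory Defs
  imports "Jordan_Normal_Form.Determinant"
begin

text \<open>Arcs are numbered 0 ..< arcs D.  Each crossing is a triple (b, a, c):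
  b is the over-arc and a, c are the two under-arcs meeting at it.\<close>

record diagram =
  arcs :: nat
  crossings :: "(nat \<times> nat \<times> nat) list"

definition over_arc :: "nat \<times> nat \<times> nat \<Rightarrow> nat" where
  "over_arc x = fst x"
definition under_arc1 :: "nat \<times> nat \<times> nat \<Rightarrow> nat" where
  "under_arc1 x = fst (snd x)"
definition under_arc2 :: "nat \<times> nat \<times> nat \<Rightarrow> nat" where
  "under_arc2 x = snd (snd x)"

text \<open>Basic well-formedness: at least one arc, all arc indices in range, and every arc
  either ends at exactly two under-crossings (its two endpoints) or at none
  (a crossingless circle component).\<close>
definition link_diagram :: "diagram \<Rightarrow> bool" where
  "link_diagram D \<longleftrightarrow> arcs D \<ge> 1 \<and>
     (\<forall>x \<in> set (crossings D). over_arc x < arcs D \<and> under_arc1 x < arcs D \<and> under_arc2 x < arcs D) \<and>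
     (\<forall>a < arcs D.
        length (filter (\<lambda>x. under_arc1 x = a) (crossings D))
        + length (filter (\<lambda>x. under_arc2 x = a) (crossings D)) \<in> {0, 2})"

text \<open>n-colorings: colors are integers read modulo n.\<close>
definition coloring :: "nat \<Rightarrow> diagram \<Rightarrow> (nat \<Rightarrow> int) \<Rightarrow> bool" where
  "coloring n D f \<longleftrightarrow>
     (\<forall>x \<in> set (crossings D).
        (2 * f (over_arc x) - f (under_arc1 x) - f (under_arc2 x)) mod int n = 0)"

definition nontrivial_coloring :: "nat \<Rightarrow> diagram \<Rightarrow> (nat \<Rightarrow> int) \<Rightarrow> bool" where
  "nontrivial_coloring n D f \<longleftrightarrow> coloring n D f \<and>
     (\<exists>a < arcs D. \<exists>b < arcs D. f a mod int n \<noteq> f b mod int n)"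

text \<open>A coloring uses only colors from the set S of residues (S a set of representatives in [0,n)).\<close>
definition colors_in :: "nat \<Rightarrow> diagram \<Rightarrow> (nat \<Rightarrow> int) \<Rightarrow> int set \<Rightarrow> bool" where
  "colors_in n D f S \<longleftrightarrow> (\<forall>a < arcs D. f a mod int n \<in> S)"

definition coloring_matrix :: "diagram \<Rightarrow> int mat" where
  "coloring_matrix D = mat (length (crossings D)) (arcs D)
     (\<lambda>(i, j). let x = crossings D ! i in
        2 * (if over_arc x = j then 1 else 0) - (if under_arc1 x = j then 1 else 0)
          - (if under_arc2 x = j then 1 else 0))"

text \<open>Determinant of the link: absolute value of a first minor of the coloring matrix
  (deleting one row and one column); 0 when the matrix is not square (split diagrams with
  crossingless components).\<close>
definition link_det :: "diagram \<Rightarrow> nat" where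
  "link_det D = (if length (crossings D) = arcs D \<and> arcs D \<ge> 1
     then nat \<bar>det (mat_delete (coloring_matrix D) 0 0)\<bar> else 0)"

end

theory Submission
  imports Defs
begin

text \<open>Choose the representatives of the colors in \<open>{0..k}\<close>. Then at every crossing
  \<open>2b - a - c\<close> lies in \<open>[-2k, 2k]\<close> and is divisible by \<open>2k+1\<close>, so it vanishes: the coloring
  is an honest, non-constant integer solution of the crossing equations. Subtracting the color
  of arc 0 turns it into a non-zero integer vector in the kernel of the first minor of the
  coloring matrix, whence \<open>det L = 0\<close>.

  Since \<open>z mod 0 = z\<close>, \<open>coloring 0 D h\<close> says that \<open>h\<close> solves the crossing equations over \<open>\<int>\<close>.\<close>

lemma coloring_mod:
  assumes "coloring n D f"
  shows "coloring n D (\<lambda>a. f a mod int n)"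
proof -
  have "(2 * (u mod m) - v mod m - w mod m) mod m = (2 * u - v - w) mod m" for u v w m :: int
  proof -
    have "2 * (u mod m) - v mod m - w mod m - (2 * u - v - w)
        = (v - v mod m) + (w - w mod m) - 2 * (u - u mod m)"
      by (simp add: algebra_simps)
    also have "m dvd \<dots>"
      by (intro dvd_diff dvd_add dvd_mult dvd_minus_mod)
    finally show ?thesis
      by (simp add: mod_eq_dvd_iff)
  qed
  then show ?thesis
    using assms unfolding coloring_def by simp
qed

lemma coloring_0_if_colors_small:
  assumes "link_diagram D" "coloring n D g"
    and small: "\<And>a. a < arcs D \<Longrightarrow> 0 \<le> g a \<and> g a \<le> K" and "2 * K < int n"
  shows "coloring 0 D g"
  unfolding coloring_def
proof (intro ballI)
  fix x assume x: "x \<in> set (crossings D)"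
  define z where "z = 2 * g (over_arc x) - g (under_arc1 x) - g (under_arc2 x)"
  have "int n dvd z"
    using assms(2) x unfolding coloring_def z_def by auto
  moreover have "\<bar>z\<bar> < int n"
  proof -
    have "over_arc x < arcs D" "under_arc1 x < arcs D" "under_arc2 x < arcs D"
      using x assms(1) unfolding link_diagram_def by auto
    with small have "0 \<le> g (over_arc x) \<and> g (over_arc x) \<le> K"
      "0 \<le> g (under_arc1 x) \<and> g (under_arc1 x) \<le> K"
      "0 \<le> g (under_arc2 x) \<and> g (under_arc2 x) \<le> K"
      by blast+
    then show ?thesis
      using assms(4) unfolding z_def by linarith
  qed
  ultimately have "z = 0"
    using dvd_imp_le_int[of z "int n"] by fastforce
  then show "(2 * g (over_arc x) - g (under_arc1 x) - g (under_arc2 x)) mod int 0 = 0"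
    by (simp add: z_def)
qed

lemma coloring_matrix_mult_vec:
  assumes "i < length (crossings D)" and x: "x = crossings D ! i"
    and "over_arc x < arcs D" "under_arc1 x < arcs D" "under_arc2 x < arcs D"
  shows "(coloring_matrix D *\<^sub>v vec (arcs D) h) $ i
    = 2 * h (over_arc x) - h (under_arc1 x) - h (under_arc2 x)"
proof -
  have "(coloring_matrix D *\<^sub>v vec (arcs D) h) $ i
      = (\<Sum>j<arcs D. 2 * (if over_arc x = j then h j else 0)
           - (if under_arc1 x = j then h j else 0) - (if under_arc2 x = j then h j else 0))"
    using assms(1) unfolding coloring_matrix_def x
    by (auto simp: scalar_prod_def atLeast0LessThan algebra_simps intro!: sum.cong)
  also have "\<dots> = 2 * h (over_arc x) - h (under_arc1 x) - h (under_arc2 x)"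
    using assms(3-5) by (simp add: sum_subtractf sum_distrib_left[symmetric])
  finally show ?thesis .
qed

lemma mat_delete_00_mult_vec:
  assumes "M \<in> carrier_mat m n" "0 < n" "i < m - 1"
  shows "(mat_delete M 0 0 *\<^sub>v vec (n - 1) (\<lambda>j. h (Suc j))) $ i
    = (M *\<^sub>v vec n (h(0 := 0))) $ Suc i"
proof -
  have "(M *\<^sub>v vec n (h(0 := 0))) $ Suc i = (\<Sum>j<Suc (n - 1). M $$ (Suc i, j) * (h(0 := 0)) j)"
    using assms by (simp add: scalar_prod_def atLeast0LessThan)
  also have "\<dots> = (\<Sum>j<n - 1. M $$ (Suc i, Suc j) * h (Suc j))"
    by (subst sum.lessThan_Suc_shift) simp
  finally show ?thesis
    using assms by (simp add: scalar_prod_def atLeast0LessThan mat_delete_def)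
qed

lemma det_first_minor_eq_0_if_nonconstant_integer_coloring:
  assumes D: "link_diagram D" and square: "length (crossings D) = arcs D"
    and "coloring 0 D h" and "a < arcs D" "b < arcs D" "h a \<noteq> h b"
  shows "det (mat_delete (coloring_matrix D) 0 0) = 0"
proof -
  define n where "n = arcs D"
  define h' where "h' j = h j - h 0" for j
  define v where "v = vec (n - 1) (\<lambda>j. h' (Suc j))"
  have M: "coloring_matrix D \<in> carrier_mat n n"
    unfolding coloring_matrix_def n_def square by simp
  have "0 < n" using assms(4) by (simp add: n_def)
  have "h'(0 := 0) = h'" by (simp add: h'_def fun_eq_iff)
  have kernel: "mat_delete (coloring_matrix D) 0 0 *\<^sub>v v = 0\<^sub>v (n - 1)"
  proof (rule eq_vecI)
    fix i assume "i < dim_vec (0\<^sub>v (n - 1))"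
    then have i: "i < n - 1" by simp
    define x where "x = crossings D ! Suc i"
    have x_in: "x \<in> set (crossings D)"
      using i square unfolding x_def n_def by simp
    then have arcs: "over_arc x < n" "under_arc1 x < n" "under_arc2 x < n"
      using D unfolding link_diagram_def n_def by auto
    have "(mat_delete (coloring_matrix D) 0 0 *\<^sub>v v) $ i
        = 2 * h' (over_arc x) - h' (under_arc1 x) - h' (under_arc2 x)"
      using mat_delete_00_mult_vec[OF M \<open>0 < n\<close> i, of h'] coloring_matrix_mult_vec[of "Suc i" D x h']
        \<open>h'(0 := 0) = h'\<close> i arcs square
      unfolding v_def x_def n_def by simp
    also have "\<dots> = 0"
      using \<open>coloring 0 D h\<close> x_in unfolding coloring_def h'_def by auto
    finally show "(mat_delete (coloring_matrix D) 0 0 *\<^sub>v v) $ i = 0\<^sub>v (n - 1) $ i"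
      using i by simp
  qed (use M in \<open>simp add: v_def\<close>)
  have nonzero: "v \<noteq> 0\<^sub>v (n - 1)"
  proof
    assume "v = 0\<^sub>v (n - 1)"
    then have "h' j = 0" if "j < n" for j
      using that by (cases j) (auto simp: h'_def v_def dest!: arg_cong[where f = "\<lambda>w. w $ (j - 1)"])
    then show False
      using assms(4-6) unfolding h'_def n_def by (metis eq_iff_diff_eq_0)
  qed
  moreover have "v \<in> carrier_vec (n - 1)"
    by (simp add: v_def)
  ultimately show ?thesis
    unfolding det_0_iff_vec_prod_zero[OF mat_delete_carrier[OF M]]
    using kernel by (intro exI[of _ v]) simp
qed

theorem theorem4p1:
  fixes k :: nat and D :: diagram and S :: "int set"
  assumes "k \<ge> 1"
    and "link_diagram D"
    and "link_det D \<noteq> 0"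
    and "\<exists>f. nontrivial_coloring (2 * k + 1) D f"
    and "S \<subseteq> {0 .. int k}"
  shows "\<not> (\<exists>f. nontrivial_coloring (2 * k + 1) D f \<and> colors_in (2 * k + 1) D f S)"
proof
  assume "\<exists>f. nontrivial_coloring (2 * k + 1) D f \<and> colors_in (2 * k + 1) D f S"
  then obtain f where f: "nontrivial_coloring (2 * k + 1) D f" "colors_in (2 * k + 1) D f S"
    by blast
  define g where "g a = f a mod int (2 * k + 1)" for a
  have "coloring (2 * k + 1) D g"
    using f(1) coloring_mod unfolding nontrivial_coloring_def g_def by blast
  moreover have "\<And>a. a < arcs D \<Longrightarrow> 0 \<le> g a \<and> g a \<le> int k"
    using f(2) assms(5) unfolding colors_in_def g_def by auto
  ultimately have "coloring 0 D g"
    by (intro coloring_0_if_colors_small[OF assms(2)]) auto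
  moreover obtain a b where "a < arcs D" "b < arcs D" "g a \<noteq> g b"
    using f(1) unfolding nontrivial_coloring_def g_def by blast
  moreover have "length (crossings D) = arcs D"
    and "det (mat_delete (coloring_matrix D) 0 0) \<noteq> 0"
    using assms(3) unfolding link_det_def by (auto split: if_splits)
  ultimately show False
    using det_first_minor_eq_0_if_nonconstant_integer_coloring[OF assms(2)] by blast
qed

end
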